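(* Let $\alpha\ge1$, $\beta,\gamma\ge0$ be integers and let $(\mathbf a,\mathbf b)$ be a binary GCP of length $N=2^\alpha10^\beta26^\gamma$ obtained by the recursive Turyn construction $(\mathbf e_0,\mathbf f_0)=K_2$, $(\mathbf e_i,\mathbf f_i)=\mathrm{Turyn}(\mathcal A_i,(\mathbf e_{i-1},\mathbf f_{i-1}))$ with each $\mathcal A_i\in\{K_2,K_{10},K_{26}\}$ (so that in total $K_2$ is used $\alpha$ times, $K_{10}$ $\beta$ times and $K_{26}$ $\gamma$ times). Let $(\mathbf c,\mathbf d)=(\overleftarrow{\mathbf b},-\overleftarrow{\mathbf a})$ be its complementary mate, let $\mathbf e=(\mathbf a\|\mathbf c)$ and $\mathbf f=(\mathbf b\|\mathbf d)$ (length $2N$), and for $x_0,y_0,x_1,y_1\in\mathbb U_q$ let $\mathbf g=(x_0,e_0,\dots,e_{2N-1},y_0)$ and $\mathbf h=(x_1,f_0,\dots,f_{2N-1},y_1)$. If $$x_0-\overline{y_1}=0,\quad x_1+\overline{y_0}=0,\quad x_0=x_1,\quad \overline{y_0}=-\overline{y_1},$$ then $(\mathbf g,\mathbf h)$ is a $(2N+2,\,N/2+1)$-CZCP.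
   Context: $q\ge2$ is an integer and $\mathbb U_q=\{e^{2\pi\sqrt{-1}t/q}:0\le t<q\}$. $\overleftarrow{\mathbf a}$ denotes the reversal of $\mathbf a$; $\|$ denotes concatenation. A binary GCP (Golay complementary pair) of length $N$ is a pair of $\pm1$ sequences with $\rho_{\mathbf a}(\tau)+\rho_{\mathbf b}(\tau)=0$ for all $\tau\neq0$. Kernels (written with $+=1$, $-=-1$; first row $\mathbf a$, second row $\mathbf b$): $K_2=(++,\;+-)$; $K_{10}=(++-+-+--++,\;++-+++++--)$; $K_{26}=(++++-++--+-+-+--+-+++--+++,\;++++-++--+-+++++-+---++---)$. Turyn's method: for binary GCPs $\mathcal A=(\mathbf a,\mathbf b)$ of length $N$ and $\mathcal B=(\mathbf c,\mathbf d)$ of length $M$, $\mathrm{Turyn}(\mathcal A,\mathcal B)=(\mathbf e,\mathbf f)$ of length $MN$ with $\mathbf e=\mathbf c\otimes\frac{\mathbf a+\mathbf b}2-\overleftarrow{\mathbf d}\otimes\frac{\mathbf b-\mathbf a}2$, $\mathbf f=\mathbf d\otimes\frac{\mathbf a+\mathbf b}2+\overleftarrow{\mathbf c}\otimes\frac{\mathbf b-\mathbf a}2$, where $\mathbf u\otimes\mathbf v=(u_0\mathbf v,u_1\mathbf v,\dots)$ is the Kronecker product. Aperiodic correlation: for complex sequences $\mathbf a,\mathbf b$ of length $N$, $\rho_{\mathbf a,\mathbf b}(\tau)=\sum_{k=0}^{N-1-\tau}a_k\overline{b_{k+\tau}}$ for $0\le\tau\le N-1$, $\rho_{\mathbf a,\mathbf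 b}(\tau)=\sum_{k=0}^{N-1+\tau}a_{k-\tau}\overline{b_k}$ for $-(N-1)\le\tau\le-1$, and $0$ for $|\tau|\ge N$; $\rho_{\mathbf a}=\rho_{\mathbf a,\mathbf a}$. CZCP: with $\mathcal T_1=\{1,\dots,Z\}$, $\mathcal T_2=\{N-Z,\dots,N-1\}$, a pair $(\mathbf a,\mathbf b)$ of length-$N$ sequences is an $(N,Z)$-CZCP if $\rho_{\mathbf a}(\tau)+\rho_{\mathbf b}(\tau)=0$ for all $|\tau|\in\mathcal T_1\cup\mathcal T_2$ and $\rho_{\mathbf a,\mathbf b}(\tau)+\rho_{\mathbf b,\mathbf a}(\tau)=0$ for all $|\tau|\in\mathcal T_2$. *)

theory Defs
  imports Complex_Main
begin

type_synonym cseq = "complex list"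

definition roots_U :: "nat \<Rightarrow> complex set" where
  "roots_U q = {cis (2 * pi * real t / real q) | t. t < q}"

text \<open>Aperiodic (cross-)correlation rho_{a,b}(tau), with 0 for |tau| >= N.\<close>
definition acorr :: "cseq \<Rightarrow> cseq \<Rightarrow> int \<Rightarrow> complex" where
  "acorr a b tau =
     (if tau \<ge> 0
      then (\<Sum>k<length a - nat tau. a ! k * cnj (b ! (k + nat tau)))
      else (\<Sum>k<length a - nat (- tau). a ! (k + nat (- tau)) * cnj (b ! k)))"

abbreviation aacorr :: "cseq \<Rightarrow> int \<Rightarrow> complex" where
  "aacorr a \<equiv> acorr a a"

definition CZCP :: "nat \<Rightarrow> nat \<Rightarrow> cseq \<Rightarrow> cseq \<Rightarrow> bool" where
  "CZCP N Z a b \<longleftrightarrow> length a = N \<and> length b = N \<and>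
     (\<forall>tau::int. nat \<bar>tau\<bar> \<in> {1..Z} \<union> {N - Z..N - 1} \<longrightarrow> aacorr a tau + aacorr b tau = 0) \<and>
     (\<forall>tau::int. nat \<bar>tau\<bar> \<in> {N - Z..N - 1} \<longrightarrow> acorr a b tau + acorr b a tau = 0)"

definition half_sum :: "cseq \<Rightarrow> cseq \<Rightarrow> cseq" where
  "half_sum a b = map (\<lambda>(x, y). (x + y) / 2) (zip a b)"

definition half_diff :: "cseq \<Rightarrow> cseq \<Rightarrow> cseq" where
  "half_diff b a = map (\<lambda>(x, y). (x - y) / 2) (zip b a)"

definition vadd :: "cseq \<Rightarrow> cseq \<Rightarrow> cseq" where
  "vadd u v = map (\<lambda>(x, y). x + y) (zip u v)"

definition vsub :: "cseq \<Rightarrow> cseq \<Rightarrow> cseq" where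
  "vsub u v = map (\<lambda>(x, y). x - y) (zip u v)"

definition kron :: "cseq \<Rightarrow> cseq \<Rightarrow> cseq" where
  "kron u v = concat (map (\<lambda>x. map (\<lambda>y. x * y) v) u)"

definition turyn :: "cseq \<times> cseq \<Rightarrow> cseq \<times> cseq \<Rightarrow> cseq \<times> cseq" where
  "turyn A B = (let (a, b) = A; (c, d) = B in
     (vsub (kron c (half_sum a b)) (kron (rev d) (half_diff b a)),
      vadd (kron d (half_sum a b)) (kron (rev c) (half_diff b a))))"

definition K2 :: "cseq \<times> cseq" where
  "K2 = ([1, 1], [1, -1])"

definition K10 :: "cseq \<times> cseq" where
  "K10 = ([1, 1, -1, 1, -1, 1, -1, -1, 1, 1], [1, 1, -1, 1, 1, 1, 1, 1, -1, -1])"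

definition K26 :: "cseq \<times> cseq" where
  "K26 = ([1, 1, 1, 1, -1, 1, 1, -1, -1, 1, -1, 1, -1, 1, -1, -1, 1, -1, 1, 1, 1, -1, -1, 1, 1, 1],
          [1, 1, 1, 1, -1, 1, 1, -1, -1, 1, -1, 1, 1, 1, 1, 1, -1, 1, -1, -1, -1, 1, 1, -1, -1, -1])"

definition turyn_rec :: "(cseq \<times> cseq) list \<Rightarrow> cseq \<times> cseq" where
  "turyn_rec ks = foldl (\<lambda>P A. turyn A P) K2 ks"

end

theory Submission
  imports Defs "HOL-Computational_Algebra.Polynomial"
begin

text \<open>Identify a sequence \<open>u\<close> with the polynomial \<open>\<Sum>i. u\<^sub>i X\<^sup>i\<close>. The aperiodic correlations of
  \<open>u\<close> and \<open>v\<close> are then the coefficients of \<open>u(X) v\<^sup>*(X)\<close>, where \<open>v\<^sup>*\<close> is the conjugated reversal,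
  and a real pair \<open>(a, b)\<close> of length \<open>n\<close> is a Golay pair iff \<open>a a\<^sup>* + b b\<^sup>* = 2n X\<^sup>n\<^sup>-\<^sup>1\<close>.
  Turyn's construction multiplies two such identities, so the recursive construction yields a real
  Golay pair \<open>(a, b)\<close> of length \<open>N\<close>. Since the previous pair supplies the block pattern of the next
  one, \<open>(a, b)\<close> also inherits the shape of \<open>K\<^sub>2 = (++, +-)\<close>: \<open>a\<close> agrees with \<open>b\<close> on its first half and
  is its negative on the second half.

  Below the top degree, the sum of the autocorrelation polynomials of \<open>g\<close> and \<open>h\<close> is
  \<open>2 x\<^sub>0 X (b - a)\<close> plus the Golay identity shifted to degree \<open>2N + 1\<close> (the shift 0), and \<open>b - a\<close>
  lives on the second half; the sum of the cross-correlation polynomials is \<open>X\<^sup>2 (b\<^sup>2 - a\<^sup>2)\<close> in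
  degrees up to \<open>N\<close>, which vanishes as long as only first halves are involved.\<close>

lemma kron_Nil [simp]: "kron [] v = []"
  by (simp add: kron_def)

lemma kron_Cons: "kron (x # u) v = map ((*) x) v @ kron u v"
  by (simp add: kron_def)

lemma kron_append: "kron (u @ w) v = kron u v @ kron w v"
  by (simp add: kron_def)

lemma length_kron [simp]: "length (kron u v) = length u * length v"
  by (induction u) (simp_all add: kron_Cons)

lemma rev_kron: "rev (kron u v) = kron (rev u) (rev v)"
  by (induction u) (simp_all add: kron_Cons kron_append rev_map)

lemma map_cnj_kron: "map cnj (kron u v) = kron (map cnj u) (map cnj v)"
  by (induction u) (simp_all add: kron_Cons)

lemma nth_kron:
  assumes "i < length u * length v"
  shows "kron u v ! i = u ! (i div length v) * v ! (i mod length v)"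
  using assms
proof (induction u arbitrary: i)
  case (Cons x u)
  show ?case
  proof (cases "i < length v")
    case False
    then have "i - length v < length u * length v" and v: "0 < length v"
      using Cons.prems by auto
    moreover have "i div length v = Suc ((i - length v) div length v)"
      using le_div_geq[OF v] False by simp
    moreover have "(i - length v) mod length v = i mod length v"
      using False by (simp add: le_mod_geq)
    ultimately show ?thesis
      using False Cons.IH by (simp add: kron_Cons nth_append)
  qed (simp add: kron_Cons nth_append)
qed simp

lemma pcompose_monom_monom:
  "pcompose (monom c k) (monom (1::'a::comm_ring_1) n) = monom c (k * n)"
proof (induction k)
  case (Suc k)
  have "pcompose (monom c (Suc k)) (monom 1 n) = monom 1 n * monom c (k * n)"
    by (simp add: monom_Suc pcompose_pCons Suc)
  then show ?case
    by (simp add: mult_monom add.commute)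
qed (simp add: monom_0)

lemma Poly_kron: "Poly (kron u v) = pcompose (Poly u) (monom 1 (length v)) * Poly v"
  by (induction u) (simp_all add: kron_Cons Poly_append Poly_map pcompose_pCons algebra_simps)

lemma length_elementwise [simp]:
  "length (vadd u v) = min (length u) (length v)"
  "length (vsub u v) = min (length u) (length v)"
  "length (half_sum u v) = min (length u) (length v)"
  "length (half_diff u v) = min (length u) (length v)"
  by (simp_all add: vadd_def vsub_def half_sum_def half_diff_def)

lemma nth_elementwise:
  assumes "i < length u" "i < length v"
  shows "vadd u v ! i = u ! i + v ! i"
    and "vsub u v ! i = u ! i - v ! i"
    and "half_sum u v ! i = (u ! i + v ! i) / 2"
    and "half_diff u v ! i = (u ! i - v ! i) / 2"
  using assms by (simp_all add: vadd_def vsub_def half_sum_def half_diff_def)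

lemma rev_elementwise:
  assumes "length u = length v"
  shows "rev (vadd u v) = vadd (rev u) (rev v)"
    and "rev (vsub u v) = vsub (rev u) (rev v)"
    and "rev (half_sum u v) = half_sum (rev u) (rev v)"
    and "rev (half_diff u v) = half_diff (rev u) (rev v)"
  using assms by (simp_all add: vadd_def vsub_def half_sum_def half_diff_def zip_rev rev_map)

lemma map_cnj_elementwise:
  "map cnj (vadd u v) = vadd (map cnj u) (map cnj v)"
  "map cnj (vsub u v) = vsub (map cnj u) (map cnj v)"
  "map cnj (half_sum u v) = half_sum (map cnj u) (map cnj v)"
  "map cnj (half_diff u v) = half_diff (map cnj u) (map cnj v)"
  by (simp_all add: vadd_def vsub_def half_sum_def half_diff_def zip_map1 zip_map2 split_def)

lemma Poly_elementwise:
  assumes "length u = length v"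
  shows "Poly (vadd u v) = Poly u + Poly v"
    and "Poly (vsub u v) = Poly u - Poly v"
    and "Poly (half_sum u v) = smult (1/2) (Poly u + Poly v)"
    and "Poly (half_diff u v) = smult (1/2) (Poly u - Poly v)"
  using assms
  by (induction u v rule: list_induct2)
     (simp_all add: vadd_def vsub_def half_sum_def half_diff_def add_divide_distrib diff_divide_distrib)

lemma length_turyn:
  assumes "length a = length b" "length c = length d" "turyn (a, b) (c, d) = (e, f)"
  shows "length e = length c * length a" and "length f = length c * length a"
  using assms by (auto simp: turyn_def)

lemma nth_turyn:
  assumes "length a = length b" "length c = length d" "turyn (a, b) (c, d) = (e, f)"
    and "i < length c * length a"
  defines "k \<equiv> i div length a" and "j \<equiv> i mod length a"
  shows "e ! i = c ! k * ((a ! j + b ! j) / 2) - d ! (length c - 1 - k) * ((b ! j - a ! j) / 2)"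
    and "f ! i = d ! k * ((a ! j + b ! j) / 2) + c ! (length c - 1 - k) * ((b ! j - a ! j) / 2)"
    and "k < length c"
proof -
  show k: "k < length c"
    using assms(4) by (simp add: k_def less_mult_imp_div_less)
  have j: "j < length a"
    using assms(4) by (cases "length a") (simp_all add: j_def)
  have "e = vsub (kron c (half_sum a b)) (kron (rev d) (half_diff b a))"
    and "f = vadd (kron d (half_sum a b)) (kron (rev c) (half_diff b a))"
    using assms(3) by (auto simp: turyn_def)
  then show "e ! i = c ! k * ((a ! j + b ! j) / 2) - d ! (length c - 1 - k) * ((b ! j - a ! j) / 2)"
    and "f ! i = d ! k * ((a ! j + b ! j) / 2) + c ! (length c - 1 - k) * ((b ! j - a ! j) / 2)"
    using assms(1,2,4) k j unfolding k_def j_def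
    by (simp_all add: nth_elementwise nth_kron rev_nth)
qed

lemma Poly_turyn:
  assumes "length a = length b" "length c = length d" "turyn (a, b) (c, d) = (e, f)"
  defines "W \<equiv> monom 1 (length a)" and "s \<equiv> half_sum a b" and "t \<equiv> half_diff b a"
  shows "Poly e = pcompose (Poly c) W * Poly s - pcompose (Poly (rev d)) W * Poly t"
    and "Poly f = pcompose (Poly d) W * Poly s + pcompose (Poly (rev c)) W * Poly t"
    and "Poly (rev e) = pcompose (Poly (rev c)) W * Poly (rev s) - pcompose (Poly d) W * Poly (rev t)"
    and "Poly (rev f) = pcompose (Poly (rev d)) W * Poly (rev s) + pcompose (Poly c) W * Poly (rev t)"
proof -
  have e: "e = vsub (kron c s) (kron (rev d) t)" and f: "f = vadd (kron d s) (kron (rev c) t)"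
    using assms(3) by (auto simp: turyn_def s_def t_def)
  have "length s = length a" "length t = length a"
    using assms(1) by (simp_all add: s_def t_def)
  then show "Poly e = pcompose (Poly c) W * Poly s - pcompose (Poly (rev d)) W * Poly t"
    and "Poly f = pcompose (Poly d) W * Poly s + pcompose (Poly (rev c)) W * Poly t"
    and "Poly (rev e) = pcompose (Poly (rev c)) W * Poly (rev s) - pcompose (Poly d) W * Poly (rev t)"
    and "Poly (rev f) = pcompose (Poly (rev d)) W * Poly (rev s) + pcompose (Poly c) W * Poly (rev t)"
    using assms(2) unfolding e f W_def
    by (simp_all add: Poly_elementwise rev_elementwise rev_kron Poly_kron mult.commute)
qed

lemma map_cnj_turyn:
  "turyn (map cnj a, map cnj b) (map cnj c, map cnj d) = map_prod (map cnj) (map cnj) (turyn (a, b) (c, d))"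
  by (simp add: turyn_def map_cnj_kron map_cnj_elementwise rev_map)

lemma turyn_product_identity:
  fixes C Cr D Dr S Sr T Tr :: "'a::comm_ring"
  shows "(C * S - Dr * T) * (Cr * Sr - D * Tr) + (D * S + Cr * T) * (Dr * Sr + C * Tr)
       = (C * Cr + D * Dr) * (S * Sr + T * Tr)"
  by (simp add: algebra_simps)

text \<open>For real sequences the coefficient of \<open>X\<^sup>n\<^sup>-\<^sup>1\<^sup>-\<^sup>\<tau>\<close> on the left is
  \<open>\<rho>\<^sub>a(\<tau>) + \<rho>\<^sub>b(\<tau>)\<close>, so this is the Golay condition.\<close>

definition golay_pair :: "cseq \<Rightarrow> cseq \<Rightarrow> bool" where
  "golay_pair a b \<longleftrightarrow> length a = length b \<and> 1 \<le> length a \<and>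
     Poly a * Poly (rev a) + Poly b * Poly (rev b) = monom (2 * of_nat (length a)) (length a - 1)"

lemma golay_pair_pcompose:
  assumes "golay_pair c d"
  shows "pcompose (Poly c) (monom 1 n) * pcompose (Poly (rev c)) (monom 1 n)
       + pcompose (Poly d) (monom 1 n) * pcompose (Poly (rev d)) (monom 1 n)
       = monom (2 * of_nat (length c)) ((length c - 1) * n)"
proof -
  have "pcompose (Poly c) (monom 1 n) * pcompose (Poly (rev c)) (monom 1 n)
       + pcompose (Poly d) (monom 1 n) * pcompose (Poly (rev d)) (monom 1 n)
       = pcompose (Poly c * Poly (rev c) + Poly d * Poly (rev d)) (monom 1 n)"
    by (simp add: pcompose_mult pcompose_add)
  then show ?thesis
    using assms by (simp add: golay_pair_def pcompose_monom_monom)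
qed

lemma golay_pair_half_sum_half_diff:
  assumes "golay_pair a b"
  shows "Poly (half_sum a b) * Poly (rev (half_sum a b)) + Poly (half_diff b a) * Poly (rev (half_diff b a))
       = monom (of_nat (length a)) (length a - 1)"
proof -
  define A B Ar Br where "A = Poly a" "B = Poly b" "Ar = Poly (rev a)" "Br = Poly (rev b)"
  have len: "length a = length b"
    using assms by (simp add: golay_pair_def)
  have "Poly (half_sum a b) * Poly (rev (half_sum a b)) + Poly (half_diff b a) * Poly (rev (half_diff b a))
      = smult (1/2) (A + B) * smult (1/2) (Ar + Br) + smult (1/2) (B - A) * smult (1/2) (Br - Ar)"
    using len by (simp add: Poly_elementwise rev_elementwise A_B_Ar_Br_def)
  also have "\<dots> = smult (1/4) ((A + B) * (Ar + Br) + (B - A) * (Br - Ar))"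
    by (simp flip: smult_add_right)
  also have "(A + B) * (Ar + Br) + (B - A) * (Br - Ar) = (A * Ar + B * Br) + (A * Ar + B * Br)"
    by (simp add: algebra_simps)
  also have "A * Ar + B * Br = monom (2 * of_nat (length a)) (length a - 1)"
    using assms by (simp add: golay_pair_def A_B_Ar_Br_def)
  finally show ?thesis
    by (simp add: add_monom smult_monom)
qed

lemma golay_pair_turyn:
  assumes ab: "golay_pair a b" and cd: "golay_pair c d" and ef: "turyn (a, b) (c, d) = (e, f)"
  shows "golay_pair e f"
proof -
  let ?n = "length a" and ?m = "length c"
  have len: "length a = length b" "length c = length d" "1 \<le> ?n" "1 \<le> ?m"
    using ab cd by (simp_all add: golay_pair_def)
  have "Poly e * Poly (rev e) + Poly f * Poly (rev f)
      = (pcompose (Poly c) (monom 1 ?n) * pcompose (Poly (rev c)) (monom 1 ?n)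
         + pcompose (Poly d) (monom 1 ?n) * pcompose (Poly (rev d)) (monom 1 ?n))
      * (Poly (half_sum a b) * Poly (rev (half_sum a b)) + Poly (half_diff b a) * Poly (rev (half_diff b a)))"
    unfolding Poly_turyn[OF len(1,2) ef] by (rule turyn_product_identity)
  also have "\<dots> = monom (2 * of_nat ?m) ((?m - 1) * ?n) * monom (of_nat ?n) (?n - 1)"
    by (simp only: golay_pair_pcompose[OF cd] golay_pair_half_sum_half_diff[OF ab])
  also have "\<dots> = monom (2 * of_nat (?m * ?n)) (?m * ?n - 1)"
    using len(3,4) by (simp add: mult_monom algebra_simps diff_mult_distrib)
  finally show ?thesis
    using length_turyn[OF len(1,2) ef] len by (simp add: golay_pair_def mult.commute)
qed

definition negates_second_half :: "cseq \<Rightarrow> cseq \<Rightarrow> bool" where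
  "negates_second_half a b \<longleftrightarrow> length a = length b \<and> even (length a) \<and>
     (\<forall>i<length a. a ! i = (if i < length a div 2 then b ! i else - b ! i))"

lemma negates_second_half_turyn:
  assumes "length a = length b" "1 \<le> length a" "negates_second_half c d"
    and ef: "turyn (a, b) (c, d) = (e, f)"
  shows "negates_second_half e f"
proof -
  let ?n = "length a" and ?m = "length c"
  have cd: "length d = ?m" "even ?m" "\<And>k. k < ?m \<Longrightarrow> c ! k = (if k < ?m div 2 then d ! k else - d ! k)"
    using assms(3) by (auto simp: negates_second_half_def)
  have len: "length e = ?m * ?n" "length f = ?m * ?n"
    using length_turyn[OF assms(1) _ ef] cd(1) by simp_all
  have "e ! i = (if i < (?m * ?n) div 2 then f ! i else - f ! i)" if i: "i < ?m * ?n" for i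
  proof -
    let ?k = "i div ?n"
    note T = nth_turyn[OF assms(1) cd(1)[symmetric] ef i]
    have "(?m * ?n) div 2 = ?m div 2 * ?n" "0 < ?n"
      using cd(2) assms(2) by auto
    then have first_half: "i < (?m * ?n) div 2 \<longleftrightarrow> ?k < ?m div 2"
      by (simp add: div_less_iff_less_mult)
    have mirror: "?m - 1 - ?k < ?m" "?m - 1 - ?k < ?m div 2 \<longleftrightarrow> \<not> ?k < ?m div 2"
      using T(3) cd(2) by auto
    show ?thesis
    proof (cases "?k < ?m div 2")
      case True
      then have "c ! ?k = d ! ?k" "c ! (?m - 1 - ?k) = - d ! (?m - 1 - ?k)"
        using cd(3)[OF T(3)] cd(3)[OF mirror(1)] mirror(2) by simp_all
      then show ?thesis
        using True first_half by (simp add: T(1,2))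
    next
      case False
      then have "c ! ?k = - d ! ?k" "c ! (?m - 1 - ?k) = d ! (?m - 1 - ?k)"
        using cd(3)[OF T(3)] cd(3)[OF mirror(1)] mirror(2) by simp_all
      then show ?thesis
        using False first_half by (simp add: T(1,2) algebra_simps)
    qed
  qed
  then show ?thesis
    using len cd(2) by (simp add: negates_second_half_def)
qed

lemma turyn_rec_snoc: "turyn_rec (ks @ [A]) = turyn A (turyn_rec ks)"
  by (simp add: turyn_rec_def)

lemma turyn_rec_invariant:
  assumes "P K2" and "\<And>A B. A \<in> set ks \<Longrightarrow> P B \<Longrightarrow> P (turyn A B)"
  shows "P (turyn_rec ks)"
  using assms(2) by (induction ks rule: rev_induct) (simp_all add: turyn_rec_def assms(1))

lemma length_turyn_rec:
  assumes "\<forall>(a', b')\<in>set ks. length a' = length b'" and "turyn_rec ks = (a, b)"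
  shows "length a = 2 * prod_list (map (\<lambda>A. length (fst A)) ks) \<and> length b = length a"
  using assms
proof (induction ks arbitrary: a b rule: rev_induct)
  case Nil
  then show ?case by (auto simp: turyn_rec_def K2_def)
next
  case (snoc A ks)
  obtain a' b' where A: "A = (a', b')" by fastforce
  obtain c d where cd: "turyn_rec ks = (c, d)" by fastforce
  have "length c = 2 * prod_list (map (\<lambda>A. length (fst A)) ks)" "length d = length c"
    using snoc by (auto simp: cd)
  then show ?case
    using length_turyn[of a' b' c d a b] snoc.prems by (auto simp: A cd turyn_rec_snoc)
qed

lemma map_cnj_turyn_rec:
  assumes "\<forall>A\<in>set ks. map_prod (map cnj) (map cnj) A = A"
  shows "map_prod (map cnj) (map cnj) (turyn_rec ks) = turyn_rec ks"
proof (rule turyn_rec_invariant)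
  fix A B :: "cseq \<times> cseq"
  assume "A \<in> set ks" and B: "map_prod (map cnj) (map cnj) B = B"
  moreover obtain a b c d where "A = (a, b)" and "B = (c, d)"
    by fastforce
  ultimately have "map cnj a = a" "map cnj b = b" "map cnj c = c" "map cnj d = d"
    using assms by auto
  then show "map_prod (map cnj) (map cnj) (turyn A B) = turyn A B"
    using map_cnj_turyn[of a b c d] \<open>A = (a, b)\<close> \<open>B = (c, d)\<close> by simp
qed (simp add: K2_def)

lemma kernels_golay_pair: "(a, b) \<in> {K2, K10, K26} \<Longrightarrow> golay_pair a b"
  by (auto simp: golay_pair_def K2_def K10_def K26_def monom_Suc monom_0)

lemma map_cnj_kernels: "A \<in> {K2, K10, K26} \<Longrightarrow> map_prod (map cnj) (map cnj) A = A"
  by (auto simp: K2_def K10_def K26_def)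

lemma golay_pair_turyn_rec:
  assumes "\<forall>(a', b')\<in>set ks. golay_pair a' b'"
  shows "case_prod golay_pair (turyn_rec ks)"
proof (rule turyn_rec_invariant)
  fix A B :: "cseq \<times> cseq"
  assume "A \<in> set ks" and B: "case_prod golay_pair B"
  moreover obtain a b c d where "A = (a, b)" and "B = (c, d)"
    by fastforce
  ultimately have "golay_pair a b" "golay_pair c d"
    using assms by auto
  moreover obtain e f where ef: "turyn (a, b) (c, d) = (e, f)"
    by fastforce
  ultimately have "golay_pair e f"
    by (rule golay_pair_turyn)
  then show "case_prod golay_pair (turyn A B)"
    using ef \<open>A = (a, b)\<close> \<open>B = (c, d)\<close> by simp
next
  show "case_prod golay_pair K2"
    using kernels_golay_pair[of "[1, 1]" "[1, -1]"] by (simp add: K2_def)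
qed

lemma negates_second_half_turyn_rec:
  assumes "\<forall>(a', b')\<in>set ks. golay_pair a' b'"
  shows "case_prod negates_second_half (turyn_rec ks)"
proof (rule turyn_rec_invariant)
  fix A B :: "cseq \<times> cseq"
  assume "A \<in> set ks" and B: "case_prod negates_second_half B"
  moreover obtain a b c d where "A = (a, b)" and "B = (c, d)"
    by fastforce
  ultimately have "length a = length b" "1 \<le> length a" "negates_second_half c d"
    using assms by (auto simp: golay_pair_def)
  moreover obtain e f where ef: "turyn (a, b) (c, d) = (e, f)"
    by fastforce
  ultimately have "negates_second_half e f"
    by (rule negates_second_half_turyn)
  then show "case_prod negates_second_half (turyn A B)"
    using ef \<open>A = (a, b)\<close> \<open>B = (c, d)\<close> by simp
qed (simp add: K2_def negates_second_half_def less_Suc_eq)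

lemma prod_kernel_lengths:
  assumes "set ks \<subseteq> {K2, K10, K26}"
  shows "prod_list (map (\<lambda>A. length (fst A)) ks)
       = 2 ^ count_list ks K2 * 10 ^ count_list ks K10 * 26 ^ count_list ks K26"
  using assms
proof (induction ks)
  case (Cons A ks)
  have "K2 \<noteq> K10" "K2 \<noteq> K26" "K10 \<noteq> K26"
    by (simp_all add: K2_def K10_def K26_def)
  moreover have "length (fst K2) = 2" "length (fst K10) = 10" "length (fst K26) = 26"
    by (simp_all add: K2_def K10_def K26_def)
  ultimately show ?case
    using Cons by auto
qed simp

lemma turyn_rec_kernels:
  assumes "set ks \<subseteq> {K2, K10, K26}" and "turyn_rec ks = (a, b)"
  shows "golay_pair a b" and "negates_second_half a b" and "map cnj a = a" and "map cnj b = b"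
    and "length a = 2 ^ (count_list ks K2 + 1) * 10 ^ count_list ks K10 * 26 ^ count_list ks K26"
proof -
  have golay: "\<forall>(a', b')\<in>set ks. golay_pair a' b'"
    using assms(1) kernels_golay_pair by blast
  then show "golay_pair a b" "negates_second_half a b"
    using golay_pair_turyn_rec negates_second_half_turyn_rec assms(2) by (metis case_prod_conv)+
  have "\<forall>A\<in>set ks. map_prod (map cnj) (map cnj) A = A"
    using assms(1) map_cnj_kernels by blast
  then show "map cnj a = a" "map cnj b = b"
    using map_cnj_turyn_rec[of ks] assms(2) by simp_all
  have "\<forall>(a', b')\<in>set ks. length a' = length b'"
    using golay by (auto simp: golay_pair_def)
  then show "length a = 2 ^ (count_list ks K2 + 1) * 10 ^ count_list ks K10 * 26 ^ count_list ks K26"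
    using length_turyn_rec[OF _ assms(2)] prod_kernel_lengths[OF assms(1)] by simp
qed

definition corr_poly :: "cseq \<Rightarrow> cseq \<Rightarrow> complex poly" where
  "corr_poly u v = Poly u * Poly (rev (map cnj v))"

lemma acorr_eq_coeff_corr_poly:
  assumes "length u = L" "length v = L" "t < L"
  shows "acorr u v (int t) = coeff (corr_poly u v) (L - 1 - t)"
proof -
  have "coeff (Poly u) i * coeff (Poly (rev (map cnj v))) (L - 1 - t - i) = u ! i * cnj (v ! (i + t))"
    if "i \<le> L - 1 - t" for i
  proof -
    have "L - 1 - (L - 1 - t - i) = i + t"
      using that assms(3) by auto
    then show ?thesis
      using that assms by (simp add: nth_default_def rev_nth add.commute)
  qed
  moreover have "{..<L - t} = {..L - 1 - t}"
    using assms(3) by auto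
  ultimately show ?thesis
    using assms by (simp add: acorr_def corr_poly_def coeff_mult)
qed

lemma acorr_uminus:
  assumes "length u = length v"
  shows "acorr u v (- int t) = cnj (acorr v u (int t))"
  using assms by (cases "t = 0") (simp_all add: acorr_def mult.commute)

lemma CZCP_intro_nat:
  assumes "length g = L" "length h = L"
    and auto_zero: "\<And>t. t \<in> {1..Z} \<union> {L - Z..L - 1} \<Longrightarrow> aacorr g (int t) + aacorr h (int t) = 0"
    and cross_zero: "\<And>t. t \<in> {L - Z..L - 1} \<Longrightarrow> acorr g h (int t) + acorr h g (int t) = 0"
  shows "CZCP L Z g h"
  unfolding CZCP_def
proof (intro conjI allI impI)
  fix \<tau> :: int
  have \<tau>: "\<tau> = int (nat \<bar>\<tau>\<bar>) \<or> \<tau> = - int (nat \<bar>\<tau>\<bar>)"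
    by linarith
  show "aacorr g \<tau> + aacorr h \<tau> = 0" if "nat \<bar>\<tau>\<bar> \<in> {1..Z} \<union> {L - Z..L - 1}"
    using \<tau> auto_zero[OF that] acorr_uminus[of g g] acorr_uminus[of h h]
    by (metis complex_cnj_add complex_cnj_zero)
  show "acorr g h \<tau> + acorr h g \<tau> = 0" if "nat \<bar>\<tau>\<bar> \<in> {L - Z..L - 1}"
    using \<tau> cross_zero[OF that] acorr_uminus[of g h] acorr_uminus[of h g] assms(1,2)
    by (metis add.commute complex_cnj_add complex_cnj_zero)
qed (use assms in simp_all)

lemma Poly_bordered:
  fixes p q :: "'a::comm_semiring_1"
  shows "Poly (p # xs @ [q]) = [:p:] + monom 1 1 * Poly xs + monom q (Suc (length xs))"
proof -
  have "Poly (p # xs @ [q]) = Poly [p] + monom 1 1 * (Poly xs + monom q (length xs))"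
    using Poly_append[of "[p]" "xs @ [q]"] by (simp add: Poly_snoc)
  then show ?thesis
    by (simp add: distrib_left mult_monom add.assoc)
qed

lemma coeff_mult_add_monom_low:
  fixes p r :: "'a::comm_semiring_1 poly"
  assumes "n < k"
  shows "coeff ((p + monom c k) * (r + monom d k)) n = coeff (p * r) n"
proof -
  have "monom c k = monom 1 k * [:c:]" "monom d k = monom 1 k * [:d:]"
    by (simp_all flip: monom_0 add: mult_monom)
  then have "(p + monom c k) * (r + monom d k) = p * r + monom 1 k * ([:c:] * r + [:d:] * p + monom c k * [:d:])"
    by (simp add: algebra_simps)
  then show ?thesis
    using assms by (simp add: coeff_monom_mult)
qed

lemma coeff_corr_poly_bordered:
  assumes "length ys = length xs" "n \<le> length xs"
    and "Poly xs = P" "Poly (rev (map cnj ys)) = Q"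
  shows "coeff (corr_poly (p # xs @ [q]) (r # ys @ [s])) n
       = coeff (([:p:] + monom 1 1 * P) * ([:cnj s:] + monom 1 1 * Q)) n"
proof -
  have "rev (map cnj (r # ys @ [s])) = cnj s # rev (map cnj ys) @ [cnj r]"
    by simp
  then have "corr_poly (p # xs @ [q]) (r # ys @ [s])
      = (([:p:] + monom 1 1 * P) + monom q (Suc (length xs)))
      * (([:cnj s:] + monom 1 1 * Q) + monom (cnj r) (Suc (length xs)))"
    using assms(1,3,4) by (simp only: corr_poly_def Poly_bordered length_rev length_map)
  then show ?thesis
    using assms(2) by (simp only: coeff_mult_add_monom_low le_imp_less_Suc)
qed

lemma Poly_map_uminus: "Poly (map uminus xs) = - Poly xs"
  by (induction xs) simp_all

text \<open>With the border conditions of the theorem solved (\<open>x\<^sub>1 = x\<^sub>0\<close>, \<open>y\<^sub>0 = - cnj x\<^sub>0\<close>,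
  \<open>y\<^sub>1 = cnj x\<^sub>0\<close>), \<open>g\<close> and \<open>h\<close> below are the sequences of the theorem.\<close>

context
  fixes a b :: cseq
  assumes golay: "golay_pair a b"
    and real: "map cnj a = a" "map cnj b = b"
    and negated: "negates_second_half a b"
begin

lemma coeff_Poly_eq_outside_second_half:
  assumes "j < length a div 2 \<or> length a \<le> j"
  shows "coeff (Poly b) j = coeff (Poly a) j"
  using negated assms by (auto simp: negates_second_half_def nth_default_def)

lemma Poly_mates:
  "Poly (a @ rev b) = Poly a + monom 1 (length a) * Poly (rev b)"
  "Poly (rev (map cnj (a @ rev b))) = Poly b + monom 1 (length a) * Poly (rev a)"
  "Poly (b @ map uminus (rev a)) = Poly b - monom 1 (length a) * Poly (rev a)"
  "Poly (rev (map cnj (b @ map uminus (rev a)))) = - Poly a + monom 1 (length a) * Poly (rev b)"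
proof -
  have len: "length b = length a"
    using golay by (simp add: golay_pair_def)
  have "map cnj (a @ rev b) = map cnj a @ rev (map cnj b)"
    and "map cnj (b @ map uminus (rev a)) = map cnj b @ map uminus (rev (map cnj a))"
    by (simp_all add: rev_map)
  then have rev_e: "rev (map cnj (a @ rev b)) = b @ rev a"
    and rev_f: "rev (map cnj (b @ map uminus (rev a))) = map uminus a @ rev b"
    unfolding real by (simp_all add: rev_map)
  show "Poly (a @ rev b) = Poly a + monom 1 (length a) * Poly (rev b)"
    "Poly (rev (map cnj (a @ rev b))) = Poly b + monom 1 (length a) * Poly (rev a)"
    "Poly (b @ map uminus (rev a)) = Poly b - monom 1 (length a) * Poly (rev a)"
    "Poly (rev (map cnj (b @ map uminus (rev a)))) = - Poly a + monom 1 (length a) * Poly (rev b)"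
    unfolding rev_e rev_f using len by (simp_all add: Poly_append Poly_map_uminus rev_map)
qed

lemma coeff_auto_corr_poly_sum:
  fixes x0 :: complex
  defines "g \<equiv> x0 # (a @ rev b) @ [- cnj x0]" and "h \<equiv> x0 # (b @ map uminus (rev a)) @ [cnj x0]"
  assumes "n \<le> 2 * length a"
  shows "coeff (corr_poly g g) n + coeff (corr_poly h h) n
       = (if n = 0 then 0 else 2 * x0 * (coeff (Poly b) (n - 1) - coeff (Poly a) (n - 1)))"
proof -
  define X W A B Ar Br u where "X = (monom 1 1 :: complex poly)" "W = (monom 1 (length a) :: complex poly)"
    "A = Poly a" "B = Poly b" "Ar = Poly (rev a)" "Br = Poly (rev b)" "u = [:x0:]"
  note defs = X_W_A_B_Ar_Br_u_def
  have len: "length b = length a"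
    using golay by (simp add: golay_pair_def)
  have gg: "coeff (corr_poly g g) n
      = coeff ((u + X * (A + W * Br)) * ([:cnj (- cnj x0):] + X * (B + W * Ar))) n"
    and hh: "coeff (corr_poly h h) n
      = coeff ((u + X * (B - W * Ar)) * ([:cnj (cnj x0):] + X * (- A + W * Br))) n"
    unfolding g_def h_def defs using assms(3) len
    by (intro coeff_corr_poly_bordered Poly_mates; simp)+
  have "coeff (corr_poly g g) n + coeff (corr_poly h h) n
      = coeff ((u + X * (A + W * Br)) * (- u + X * (B + W * Ar))
             + (u + X * (B - W * Ar)) * (u + X * (- A + W * Br))) n"
    unfolding gg hh by (simp add: defs)
  also have "(u + X * (A + W * Br)) * (- u + X * (B + W * Ar))
           + (u + X * (B - W * Ar)) * (u + X * (- A + W * Br))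
           = X * (u * ((B - A) + (B - A))) + (X * X * W) * ((A * Ar + B * Br) + (A * Ar + B * Br))"
    by (simp add: algebra_simps)
  also have "coeff (X * (u * ((B - A) + (B - A))) + (X * X * W) * ((A * Ar + B * Br) + (A * Ar + B * Br))) n
      = coeff (X * (u * ((B - A) + (B - A)))) n"
  proof -
    have "X * X * W = monom 1 (length a + 2)"
      by (simp add: defs mult_monom)
    moreover have "A * Ar + B * Br = monom (2 * of_nat (length a)) (length a - 1)"
      using golay by (simp add: golay_pair_def defs)
    ultimately have "coeff ((X * X * W) * ((A * Ar + B * Br) + (A * Ar + B * Br))) n = 0"
      using assms(3) by (simp only: coeff_monom_mult coeff_add coeff_monom) auto
    then show ?thesis
      by simp
  qed
  also have "\<dots> = (if n = 0 then 0 else 2 * x0 * (coeff (Poly b) (n - 1) - coeff (Poly a) (n - 1)))"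
  proof -
    have "coeff (u * p) k = x0 * coeff p k" for p k
      by (simp add: defs)
    then show ?thesis
      by (simp only: defs(1) coeff_monom_mult coeff_add coeff_diff) (simp add: defs algebra_simps)
  qed
  finally show ?thesis .
qed

lemma coeff_cross_corr_poly_sum:
  fixes x0 :: complex
  defines "g \<equiv> x0 # (a @ rev b) @ [- cnj x0]" and "h \<equiv> x0 # (b @ map uminus (rev a)) @ [cnj x0]"
  assumes "n \<le> length a div 2"
  shows "coeff (corr_poly g h) n + coeff (corr_poly h g) n = 0"
proof -
  define X W A B Ar Br u where "X = (monom 1 1 :: complex poly)" "W = (monom 1 (length a) :: complex poly)"
    "A = Poly a" "B = Poly b" "Ar = Poly (rev a)" "Br = Poly (rev b)" "u = [:x0:]"
  note defs = X_W_A_B_Ar_Br_u_def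
  have len: "length b = length a"
    using golay by (simp add: golay_pair_def)
  have gh: "coeff (corr_poly g h) n
      = coeff ((u + X * (A + W * Br)) * ([:cnj (cnj x0):] + X * (- A + W * Br))) n"
    and hg: "coeff (corr_poly h g) n
      = coeff ((u + X * (B - W * Ar)) * ([:cnj (- cnj x0):] + X * (B + W * Ar))) n"
    unfolding g_def h_def defs using assms(3) len
    by (intro coeff_corr_poly_bordered Poly_mates; simp)+
  have "coeff (corr_poly g h) n + coeff (corr_poly h g) n
      = coeff ((u + X * (A + W * Br)) * (u + X * (- A + W * Br))
             + (u + X * (B - W * Ar)) * (- u + X * (B + W * Ar))) n"
    unfolding gh hg by (simp add: defs)
  also have "(u + X * (A + W * Br)) * (u + X * (- A + W * Br))
           + (u + X * (B - W * Ar)) * (- u + X * (B + W * Ar))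
           = (X * W) * (u * ((Br + Ar) + (Br + Ar))) + (X * X) * (B * B - A * A)
           + (X * X * W * W) * (Br * Br - Ar * Ar)"
    by (simp add: algebra_simps)
  finally have "coeff (corr_poly g h) n + coeff (corr_poly h g) n
      = (if n < 2 then 0 else coeff (B * B) (n - 2) - coeff (A * A) (n - 2))"
    using assms(3) div_le_dividend[of "length a" 2]
    by (simp add: defs mult_monom coeff_monom_mult numeral_2_eq_2)
  also have "\<dots> = 0"
  proof (cases "n < 2")
    case False
    have "coeff B i = coeff A i" if "i \<le> n - 2" for i
    proof -
      have "i < length a div 2"
        using that False assms(3) by linarith
      then show ?thesis
        using coeff_Poly_eq_outside_second_half[of i] by (simp add: defs)
    qed
    then show ?thesis
      by (simp add: coeff_mult)
  qed simp
  finally show ?thesis .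
qed

lemma CZCP_bordered_mates:
  fixes x0 :: complex
  defines "g \<equiv> x0 # (a @ rev b) @ [- cnj x0]" and "h \<equiv> x0 # (b @ map uminus (rev a)) @ [cnj x0]"
  shows "CZCP (2 * length a + 2) (length a div 2 + 1) g h"
proof -
  obtain k where k: "length a = 2 * k" "length a div 2 = k" "1 \<le> k"
    using golay negated by (auto simp: golay_pair_def negates_second_half_def elim: evenE)
  have len: "length g = 2 * length a + 2" "length h = 2 * length a + 2"
    using golay by (simp_all add: g_def h_def golay_pair_def)
  show ?thesis
  proof (rule CZCP_intro_nat[OF len])
    fix t
    assume "t \<in> {1..length a div 2 + 1} \<union> {2 * length a + 2 - (length a div 2 + 1)..2 * length a + 2 - 1}"
    then have t: "t < 2 * length a + 2" and "1 \<le> t"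
      and outside: "2 * length a - t < length a div 2 \<or> length a \<le> 2 * length a - t"
      unfolding k(1,2) using k(3) by auto
    have "aacorr g (int t) + aacorr h (int t)
        = coeff (corr_poly g g) (2 * length a + 1 - t) + coeff (corr_poly h h) (2 * length a + 1 - t)"
      using acorr_eq_coeff_corr_poly[OF len(1,1) t] acorr_eq_coeff_corr_poly[OF len(2,2) t] by simp
    also have "\<dots> = (if 2 * length a + 1 - t = 0 then 0
        else 2 * x0 * (coeff (Poly b) (2 * length a + 1 - t - 1) - coeff (Poly a) (2 * length a + 1 - t - 1)))"
      unfolding g_def h_def by (rule coeff_auto_corr_poly_sum) (use \<open>1 \<le> t\<close> in simp)
    also have "\<dots> = 0"
      using coeff_Poly_eq_outside_second_half[OF outside] by simp
    finally show "aacorr g (int t) + aacorr h (int t) = 0" .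
  next
    fix t
    assume "t \<in> {2 * length a + 2 - (length a div 2 + 1)..2 * length a + 2 - 1}"
    then have t: "t < 2 * length a + 2" and low: "2 * length a + 1 - t \<le> length a div 2"
      unfolding k(1,2) by auto
    have "acorr g h (int t) + acorr h g (int t)
        = coeff (corr_poly g h) (2 * length a + 1 - t) + coeff (corr_poly h g) (2 * length a + 1 - t)"
      using acorr_eq_coeff_corr_poly[OF len t] acorr_eq_coeff_corr_poly[OF len(2,1) t] by simp
    also have "\<dots> = 0"
      unfolding g_def h_def using low by (rule coeff_cross_corr_poly_sum)
    finally show "acorr g h (int t) + acorr h g (int t) = 0" .
  qed
qed

end

theorem theorem2:
  fixes q \<alpha> \<beta> \<gamma> N :: nat and ks :: "(cseq \<times> cseq) list"
    and a b c d e f g h :: cseq and x0 y0 x1 y1 :: complex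
  assumes "q \<ge> 2"
    and "\<alpha> \<ge> 1"
    and "set ks \<subseteq> {K2, K10, K26}"
    and "count_list ks K2 + 1 = \<alpha>" and "count_list ks K10 = \<beta>" and "count_list ks K26 = \<gamma>"
    and "N = 2 ^ \<alpha> * 10 ^ \<beta> * 26 ^ \<gamma>"
    and "(a, b) = turyn_rec ks"
    and "c = rev b" and "d = map uminus (rev a)"
    and "e = a @ c" and "f = b @ d"
    and "x0 \<in> roots_U q" and "y0 \<in> roots_U q" and "x1 \<in> roots_U q" and "y1 \<in> roots_U q"
    and "g = [x0] @ e @ [y0]" and "h = [x1] @ f @ [y1]"
    and "x0 - cnj y1 = 0" and "x1 + cnj y0 = 0" and "x0 = x1" and "cnj y0 = - cnj y1"
  shows "CZCP (2 * N + 2) (N div 2 + 1) g h"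
proof -
  note pair = turyn_rec_kernels[OF assms(3) assms(8)[symmetric]]
  have "x1 = x0" "y1 = cnj x0" "y0 = - cnj x0"
    using assms(19-22) by (metis complex_cnj_cnj complex_cnj_minus eq_iff_diff_eq_0 add_eq_0_iff)+
  moreover have "length a = N"
    using pair(5) assms(4-7) by (simp flip: assms(4))
  ultimately show ?thesis
    using CZCP_bordered_mates[OF pair(1,3,4,2), of x0] by (simp add: assms(9-12,17,18))
qed

end
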